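(* Let $I$ be an interpreted system of the propositional-action form described in the context, with proposition set $\Phi$, and let $\tilde\Phi\subseteq\Phi$. Let $\tilde I$ be the abstract interpreted system obtained from $I$ by hiding the propositions in $\Phi\setminus\tilde\Phi$, as described in the context. Then $\tilde I$ simulates $I$; specifically, the map $h:S\to\tilde S$, $h(s)=(h_i(l_i(s)))_{i\in\Omega}$, is a simulation relation between $I$ and $\tilde I$.
   Context: Interpreted systems, reachability, $\sim_i$ ($l_i(s)=l_i(s')$ and both states reachable) and simulation relations: an interpreted system is $\langle (L_i)_{i\in\Omega},(P_i),(ACT_i),S_0,\tau,\gamma\rangle$ with global states $S=\prod_i L_i$, joint actions, initial states $S_0$, interpretation $\gamma$, protocols and partial transition function $\tau$. A relation $H\subseteq S\times\tilde S$ is a simulation between $I$ and $\tilde I$ (same agents, $\tilde\Phi\subseteq\Phi$) if (1) every initial state of $I$ is related to some initial state of $\tilde I$, and for all $(s,\tilde s)\in H$: (2) $\gamma(s,p)=\tilde\gamma(\tilde s,p)$ for $p\in\tilde\Phi$; (3) whenever $\tau(\alpha,s)=s'$ there are $\tilde\alpha,\tilde s'$ with $\tilde\tau(\tilde\alpha,\tilde s)=\tilde s'$ and $(s',\tilde s')\in H$; (4) whenever $s\sim_i s'$ there is $\tilde s'$ with $\tilde s\sim_i\tilde s'$ and $(s',\tilde s')\in H$. Propositional-action form (this is the form of the interpreted systems the paper derives from access-control policies): $\Phi$ is a finite set of propositions partitioned into pairwise disjoint sets $\Phi_i$, $i\in\Omega$ (with $\Phi_e$ the environment's); each local state $l\in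 L_i$ is a valuation of $\Phi_i$, with local interpretation $\gamma_i(l,p)$, and $\gamma(s,p)=\gamma_i(l_i(s),p)$ for $p\in\Phi_i$. Each agent $i$ has a finite set of actions, each action $\alpha:\varepsilon\leftarrow\ell$ consisting of an identifier, a Boolean formula $\ell$ over $\Phi$ (the permission), and an effect $\varepsilon$, a set of signed propositions $+p$ / $-p$ (no proposition with both signs), plus the no-op $\Lambda$; $\mathbf{Ag}(\alpha)$ is the agent performing $\alpha$. Protocols allow all actions in every local state. The system is asynchronous: joint actions have at most one non-$\Lambda$ component, and are identified with that component. Writing $s[p\mapsto m]$ for the state equal to $s$ except that $p$ has value $m$, the symbolic transition is $\Theta_\alpha(st)=\{s[p\mapsto\top\mid +p\in\varepsilon][p\mapsto\bot\mid -p\in\varepsilon]\mid s\in st,\ (I,s)\models\ell\}$ and $\tau(\alpha,s)=s'$ iff $\Theta_\alpha(\{s\})=\{s'\}$. Abstraction: let $\tilde\Phi_i=\Phi_i\cap\tilde\Phi$. For $l_1,l_2\in L_i$, $l_1\Re_i l_2$ iff $\gamma_i(l_1,p)=\gamma_i(l_2,p)$ for all $p\in\tilde\Phi_i$; $h_i:L_i\to L_i/\Re_i$ is the quotient map. For a Boolean formula $f$ and proposition $x$, $\exists x.f:=f[\bot/x]\vee f[\top/x]$, extended to sets of propositions by iteration. Actions $\alpha':\varepsilon'\leftarrow\ell'$ and $\alpha:\varepsilon\leftarrow\ell$ are equivalent, $\alpha'\in[\alpha]$, iff $\{\pm p\in\varepsilon'\mid p\in\tilde\Phi\}=\{\pm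 p\in\varepsilon\mid p\in\tilde\Phi\}$, $\exists(\Phi\setminus\tilde\Phi).\ell'$ is logically equivalent to $\exists(\Phi\setminus\tilde\Phi).\ell$, and $\mathbf{Ag}(\alpha')=\mathbf{Ag}(\alpha)$. The abstract system $\tilde I$ has the same agents; $\tilde L_i=L_i/\Re_i$, $\tilde S=\prod_i\tilde L_i$; $\widetilde{ACT}_i=\{[\alpha]\mid \mathbf{Ag}(\alpha)=i\}$ (plus no-op), asynchronous, where $[\alpha]$ has evolution rule $\tilde\varepsilon\leftarrow\tilde\ell$ with $\tilde\varepsilon=\{\pm p\in\varepsilon\mid p\in\tilde\Phi\}$ and $\tilde\ell=\exists(\Phi\setminus\tilde\Phi).\ell$; $\tilde S_0=\{(h_i(l_i(s)))_{i\in\Omega}\mid s\in S_0\}$; $\tilde\gamma_i(h_i(l),p)=\gamma_i(l,p)$ for $p\in\tilde\Phi_i$ (propositions of $\tilde I$ are $\tilde\Phi$); protocols allow all actions; $\tilde\tau([\alpha],\tilde s)=\tilde s'$ iff $\tilde\Theta_{[\alpha]}(\{\tilde s\})=\{\tilde s'\}$, where $\tilde\Theta$ is defined like $\Theta$ using $\tilde\varepsilon,\tilde\ell$. *)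

theory Defs
  imports Main
begin

datatype 'p form = Var 'p | TT | FF | Neg "'p form" | Conj "'p form" "'p form" | Disj "'p form" "'p form"

primrec eval :: "('p \<Rightarrow> bool) \<Rightarrow> 'p form \<Rightarrow> bool" where
  "eval v (Var p) = v p"
| "eval v TT = True"
| "eval v FF = False"
| "eval v (Neg f) = (\<not> eval v f)"
| "eval v (Conj f g) = (eval v f \<and> eval v g)"
| "eval v (Disj f g) = (eval v f \<or> eval v g)"

primrec vars :: "'p form \<Rightarrow> 'p set" where
  "vars (Var p) = {p}"
| "vars TT = {}"
| "vars FF = {}"
| "vars (Neg f) = vars f"
| "vars (Conj f g) = vars f \<union> vars g"
| "vars (Disj f g) = vars f \<union> vars g"

primrec subst :: "'p \<Rightarrow> 'p form \<Rightarrow> 'p form \<Rightarrow> 'p form" where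
  "subst x c (Var p) = (if p = x then c else Var p)"
| "subst x c TT = TT"
| "subst x c FF = FF"
| "subst x c (Neg f) = Neg (subst x c f)"
| "subst x c (Conj f g) = Conj (subst x c f) (subst x c g)"
| "subst x c (Disj f g) = Disj (subst x c f) (subst x c g)"

text \<open>\<exists>x. f := f[\<bottom>/x] \<or> f[\<top>/x]\<close>
definition ex1 :: "'p \<Rightarrow> 'p form \<Rightarrow> 'p form" where
  "ex1 x f = Disj (subst x FF f) (subst x TT f)"

primrec exs :: "'p list \<Rightarrow> 'p form \<Rightarrow> 'p form" where
  "exs [] f = f"
| "exs (x # xs) f = ex1 x (exs xs f)"

definition exset :: "'p set \<Rightarrow> 'p form \<Rightarrow> 'p form" where
  "exset X f = exs (SOME xs. set xs = X \<and> distinct xs) f"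

text \<open>Protocols are omitted: in all systems
  considered here they allow every action in every local state.\<close>
record ('s, 'a, 'ag, 'l, 'p) isys =
  gst  :: "'s set"
  ini  :: "'s set"
  trans :: "'a \<Rightarrow> 's \<Rightarrow> 's option"
  lst  :: "'ag \<Rightarrow> 's \<Rightarrow> 'l"
  valu :: "'s \<Rightarrow> 'p \<Rightarrow> bool"

inductive reach :: "('s, 'a, 'ag, 'l, 'p) isys \<Rightarrow> 's \<Rightarrow> bool" for I where
  init: "s \<in> ini I \<Longrightarrow> reach I s"
| step: "reach I s \<Longrightarrow> trans I a s = Some t \<Longrightarrow> reach I t"

definition indist :: "('s, 'a, 'ag, 'l, 'p) isys \<Rightarrow> 'ag \<Rightarrow> 's \<Rightarrow> 's \<Rightarrow> bool" where
  "indist I i s t \<longleftrightarrow> lst I i s = lst I i t \<and> reach I s \<and> reach I t"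

definition simulation ::
  "('s, 'a, 'ag, 'l, 'p) isys \<Rightarrow> ('t, 'b, 'ag, 'm, 'p) isys \<Rightarrow> 'p set \<Rightarrow> ('s \<times> 't) set \<Rightarrow> bool" where
  "simulation I J Phi' H \<longleftrightarrow>
     H \<subseteq> gst I \<times> gst J \<and>
     (\<forall>s \<in> ini I. \<exists>t \<in> ini J. (s, t) \<in> H) \<and>
     (\<forall>(s, t) \<in> H.
        (\<forall>p \<in> Phi'. valu I s p = valu J t p) \<and>
        (\<forall>a s'. trans I a s = Some s' \<longrightarrow> (\<exists>b t'. trans J b t = Some t' \<and> (s', t') \<in> H)) \<and>
        (\<forall>i s'. indist I i s s' \<longrightarrow> (\<exists>t'. indist J i t t' \<and> (s', t') \<in> H)))"

text \<open>Propositions Phi are partitioned by the owner map own: Phi_i = {p \<in> Phi. own p = i}.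
  A global state is a tuple of local states s :: 'ag \<Rightarrow> ('p \<Rightarrow> bool), where the local state
  s i is a valuation of Phi_i (represented canonically as False outside Phi_i).
  L_i consists of all valuations of Phi_i, so S is the set of canonical tuples.\<close>
definition canon :: "'p set \<Rightarrow> ('p \<Rightarrow> 'ag) \<Rightarrow> ('ag \<Rightarrow> 'p \<Rightarrow> bool) set" where
  "canon Phi own = {s. \<forall>i p. s i p \<longrightarrow> p \<in> Phi \<and> own p = i}"

definition gam :: "('p \<Rightarrow> 'ag) \<Rightarrow> ('ag \<Rightarrow> 'p \<Rightarrow> bool) \<Rightarrow> 'p \<Rightarrow> bool" where
  "gam own s p = s (own p) p"

text \<open>Effects are sets of signed propositions: (p, True) = +p, (p, False) = -p.
  s[p \<mapsto> \<top> | +p \<in> E][p \<mapsto> \<bottom> | -p \<in> E]\<close>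
definition apply_eff :: "'p set \<Rightarrow> ('p \<Rightarrow> 'ag) \<Rightarrow> ('p \<times> bool) set
    \<Rightarrow> ('ag \<Rightarrow> 'p \<Rightarrow> bool) \<Rightarrow> ('ag \<Rightarrow> 'p \<Rightarrow> bool)" where
  "apply_eff Phi own E s = (\<lambda>i p.
     if p \<in> Phi \<and> own p = i \<and> (p, True) \<in> E then True
     else if p \<in> Phi \<and> own p = i \<and> (p, False) \<in> E then False
     else s i p)"

definition Theta :: "'p set \<Rightarrow> ('p \<Rightarrow> 'ag) \<Rightarrow> ('p \<times> bool) set \<Rightarrow> 'p form
    \<Rightarrow> ('ag \<Rightarrow> 'p \<Rightarrow> bool) set \<Rightarrow> ('ag \<Rightarrow> 'p \<Rightarrow> bool) set" where
  "Theta Phi own E l st = {apply_eff Phi own E s | s. s \<in> st \<and> eval (gam own s) l}"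

text \<open>Asynchronous joint actions: Some alpha (one agent performs alpha, all others \<Lambda>),
  or None (all agents perform the no-op \<Lambda>, with empty effect and permission \<top>).
  tau(alpha, s) = s' iff Theta_alpha({s}) = {s'}.\<close>
definition pa_trans :: "'p set \<Rightarrow> ('p \<Rightarrow> 'ag) \<Rightarrow> 'act set \<Rightarrow> ('act \<Rightarrow> ('p \<times> bool) set)
    \<Rightarrow> ('act \<Rightarrow> 'p form) \<Rightarrow> 'act option \<Rightarrow> ('ag \<Rightarrow> 'p \<Rightarrow> bool) \<Rightarrow> ('ag \<Rightarrow> 'p \<Rightarrow> bool) option" where
  "pa_trans Phi own Acts eff perm a s =
     (let (E, l) = (case a of None \<Rightarrow> ({}, TT) | Some \<alpha> \<Rightarrow> (eff \<alpha>, perm \<alpha>)) in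
      if s \<in> canon Phi own \<and> (case a of None \<Rightarrow> True | Some \<alpha> \<Rightarrow> \<alpha> \<in> Acts)
         \<and> (\<exists>s'. Theta Phi own E l {s} = {s'})
      then Some (THE s'. Theta Phi own E l {s} = {s'}) else None)"

definition pa_sys :: "'p set \<Rightarrow> ('p \<Rightarrow> 'ag) \<Rightarrow> ('ag \<Rightarrow> 'p \<Rightarrow> bool) set \<Rightarrow> 'act set
    \<Rightarrow> ('act \<Rightarrow> ('p \<times> bool) set) \<Rightarrow> ('act \<Rightarrow> 'p form)
    \<Rightarrow> ('ag \<Rightarrow> 'p \<Rightarrow> bool, 'act option, 'ag, 'p \<Rightarrow> bool, 'p) isys" where
  "pa_sys Phi own S0 Acts eff perm =
     \<lparr> gst = canon Phi own, ini = S0, trans = pa_trans Phi own Acts eff perm,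
       lst = (\<lambda>i s. s i), valu = gam own \<rparr>"

definition pa_wf :: "'p set \<Rightarrow> ('p \<Rightarrow> 'ag) \<Rightarrow> ('ag \<Rightarrow> 'p \<Rightarrow> bool) set \<Rightarrow> 'act set
    \<Rightarrow> ('act \<Rightarrow> ('p \<times> bool) set) \<Rightarrow> ('act \<Rightarrow> 'p form) \<Rightarrow> bool" where
  "pa_wf Phi own S0 Acts eff perm \<longleftrightarrow>
     finite Phi \<and> finite Acts \<and> S0 \<subseteq> canon Phi own \<and>
     (\<forall>\<alpha> \<in> Acts. fst ` eff \<alpha> \<subseteq> Phi \<and> vars (perm \<alpha>) \<subseteq> Phi \<and>
        (\<forall>p. \<not> ((p, True) \<in> eff \<alpha> \<and> (p, False) \<in> eff \<alpha>)))"

text \<open>The quotient L_i / R_i is represented by restrictions of local valuations to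
  Phi'_i = Phi_i \<inter> Phi' (two local states are R_i-related iff their restrictions coincide);
  h_i is restriction, h(s) = (h_i(l_i(s)))_i.\<close>
definition habs :: "'p set \<Rightarrow> ('ag \<Rightarrow> 'p \<Rightarrow> bool) \<Rightarrow> ('ag \<Rightarrow> 'p \<Rightarrow> bool)" where
  "habs Phi' s = (\<lambda>i p. if p \<in> Phi' then s i p else False)"

definition vis_eff :: "'p set \<Rightarrow> ('p \<times> bool) set \<Rightarrow> ('p \<times> bool) set" where
  "vis_eff Phi' E = {(p, b) \<in> E. p \<in> Phi'}"

definition act_equiv :: "'p set \<Rightarrow> 'p set \<Rightarrow> ('act \<Rightarrow> 'ag) \<Rightarrow> ('act \<Rightarrow> ('p \<times> bool) set)
    \<Rightarrow> ('act \<Rightarrow> 'p form) \<Rightarrow> 'act \<Rightarrow> 'act \<Rightarrow> bool" where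
  "act_equiv Phi Phi' agt eff perm \<alpha>' \<alpha> \<longleftrightarrow>
     vis_eff Phi' (eff \<alpha>') = vis_eff Phi' (eff \<alpha>) \<and>
     (\<forall>v. eval v (exset (Phi - Phi') (perm \<alpha>')) = eval v (exset (Phi - Phi') (perm \<alpha>))) \<and>
     agt \<alpha>' = agt \<alpha>"

definition act_class :: "'p set \<Rightarrow> 'p set \<Rightarrow> 'act set \<Rightarrow> ('act \<Rightarrow> 'ag) \<Rightarrow> ('act \<Rightarrow> ('p \<times> bool) set)
    \<Rightarrow> ('act \<Rightarrow> 'p form) \<Rightarrow> 'act \<Rightarrow> 'act set" where
  "act_class Phi Phi' Acts agt eff perm \<alpha> = {\<alpha>' \<in> Acts. act_equiv Phi Phi' agt eff perm \<alpha>' \<alpha>}"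

definition rep :: "'act set \<Rightarrow> 'act" where
  "rep C = (SOME \<alpha>. \<alpha> \<in> C)"

definition abs_sys :: "'p set \<Rightarrow> 'p set \<Rightarrow> ('p \<Rightarrow> 'ag) \<Rightarrow> ('ag \<Rightarrow> 'p \<Rightarrow> bool) set \<Rightarrow> 'act set
    \<Rightarrow> ('act \<Rightarrow> 'ag) \<Rightarrow> ('act \<Rightarrow> ('p \<times> bool) set) \<Rightarrow> ('act \<Rightarrow> 'p form)
    \<Rightarrow> ('ag \<Rightarrow> 'p \<Rightarrow> bool, 'act set option, 'ag, 'p \<Rightarrow> bool, 'p) isys" where
  "abs_sys Phi Phi' own S0 Acts agt eff perm =
     pa_sys Phi' own (habs Phi' ` S0) (act_class Phi Phi' Acts agt eff perm ` Acts)
       (\<lambda>C. vis_eff Phi' (eff (rep C)))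
       (\<lambda>C. exset (Phi - Phi') (perm (rep C)))"

end

theory Submission
  imports Defs
begin

text \<open>
  The abstraction map h = habs Phi' forgets the hidden propositions
  Phi - Phi'.  Every concrete step either is the no-op (matched by the abstract no-op)
  or executes an enabled action alpha; the abstract system then executes the class
  [alpha], whose effect is the visible part of alpha's effect and whose permission is
  the existential closure of alpha's permission over the hidden propositions.  Since
  h(s) agrees with s on all visible propositions, alpha's permission holding in s
  witnesses the existential closure in h(s), and restricting the updated state is the
  same as updating the restricted state with the visible effect.
\<close>

lemma eval_subst_const:
  assumes "c = TT \<or> c = FF"
  shows "eval v (subst x c f) = eval (v(x := eval v c)) f"
  using assms by (induction f) auto

lemma eval_exs:
  "eval v (exs xs f) \<longleftrightarrow> (\<exists>w. (\<forall>p. p \<notin> set xs \<longrightarrow> w p = v p) \<and> eval w f)"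
proof (induction xs arbitrary: v)
  case Nil
  have "(\<forall>p. w p = v p) \<longleftrightarrow> w = v" for w :: "'a \<Rightarrow> bool" by auto
  then show ?case by simp
next
  case (Cons x xs)
  have unfold: "eval v (exs (x # xs) f) \<longleftrightarrow> (\<exists>b. eval (v(x := b)) (exs xs f))"
    by (simp add: ex1_def eval_subst_const ex_bool_eq disj_commute)
  show ?case
  proof
    assume "eval v (exs (x # xs) f)"
    then obtain b where "eval (v(x := b)) (exs xs f)" using unfold by blast
    then obtain w where "\<forall>p. p \<notin> set xs \<longrightarrow> w p = (v(x := b)) p" "eval w f"
      using Cons.IH by blast
    then show "\<exists>w. (\<forall>p. p \<notin> set (x # xs) \<longrightarrow> w p = v p) \<and> eval w f"
      by (intro exI[of _ w]) auto
  next
    assume "\<exists>w. (\<forall>p. p \<notin> set (x # xs) \<longrightarrow> w p = v p) \<and> eval w f"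
    then obtain w where w: "\<forall>p. p \<notin> set (x # xs) \<longrightarrow> w p = v p" "eval w f" by blast
    then have "\<forall>p. p \<notin> set xs \<longrightarrow> w p = (v(x := w x)) p" by auto
    with w(2) have "eval (v(x := w x)) (exs xs f)" using Cons.IH by blast
    then show "eval v (exs (x # xs) f)" using unfold by blast
  qed
qed

lemma eval_exset:
  assumes "finite X" and "eval v f" and "\<forall>p. p \<notin> X \<longrightarrow> v' p = v p"
  shows "eval v' (exset X f)"
proof -
  let ?xs = "SOME xs. set xs = X \<and> distinct xs"
  have "set ?xs = X"
    using someI_ex[OF finite_distinct_list[OF assms(1)]] by blast
  then show ?thesis
    unfolding exset_def eval_exs using assms(2,3) by (intro exI[of _ v]) auto
qed

lemma reach_image:
  assumes ini_gst: "ini I \<subseteq> gst I"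
    and trans_gst: "\<And>s a s'. s \<in> gst I \<Longrightarrow> trans I a s = Some s' \<Longrightarrow> s' \<in> gst I"
    and h_ini: "h ` ini I \<subseteq> ini J"
    and h_trans: "\<And>s a s'. s \<in> gst I \<Longrightarrow> trans I a s = Some s' \<Longrightarrow>
                    \<exists>b. trans J b (h s) = Some (h s')"
    and "reach I s"
  shows "s \<in> gst I \<and> reach J (h s)"
  using \<open>reach I s\<close>
proof (induction rule: reach.induct)
  case (init s)
  then show ?case using ini_gst h_ini by (auto intro: reach.init)
next
  case (step s a t)
  then show ?case using trans_gst h_trans by (meson reach.step)
qed

lemma graph_simulation:
  assumes ini_gst: "ini I \<subseteq> gst I"
    and trans_gst: "\<And>s a s'. s \<in> gst I \<Longrightarrow> trans I a s = Some s' \<Longrightarrow> s' \<in> gst I"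
    and h_gst: "h ` gst I \<subseteq> gst J"
    and h_ini: "h ` ini I \<subseteq> ini J"
    and h_valu: "\<And>s p. s \<in> gst I \<Longrightarrow> p \<in> Phi' \<Longrightarrow> valu I s p = valu J (h s) p"
    and h_trans: "\<And>s a s'. s \<in> gst I \<Longrightarrow> trans I a s = Some s' \<Longrightarrow>
                    \<exists>b. trans J b (h s) = Some (h s')"
    and h_lst: "\<And>i s s'. lst I i s = lst I i s' \<Longrightarrow> lst J i (h s) = lst J i (h s')"
  shows "simulation I J Phi' {(s, h s) | s. s \<in> gst I}"
proof -
  have reach_h: "s \<in> gst I \<and> reach J (h s)" if "reach I s" for s
    using reach_image[of I h J s] ini_gst trans_gst h_ini h_trans that by blast
  have indist_h: "indist J i (h s) (h s')" if "indist I i s s'" for i s s'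
    using that reach_h h_lst unfolding indist_def by blast
  show ?thesis
    unfolding simulation_def
  proof (intro conjI ballI)
    show "{(s, h s) | s. s \<in> gst I} \<subseteq> gst I \<times> gst J" using h_gst by blast
    show "\<exists>t \<in> ini J. (s, t) \<in> {(s, h s) | s. s \<in> gst I}" if "s \<in> ini I" for s
      using that ini_gst h_ini by blast
  next
    fix x assume "x \<in> {(s, h s) | s. s \<in> gst I}"
    then obtain s where x: "x = (s, h s)" and s: "s \<in> gst I" by blast
    have "valu I s p = valu J (h s) p" if "p \<in> Phi'" for p using h_valu[OF s that] .
    moreover have "\<exists>b t'. trans J b (h s) = Some t' \<and> (s', t') \<in> {(s, h s) | s. s \<in> gst I}"
      if "trans I a s = Some s'" for a s'
      using h_trans[OF s that] trans_gst[OF s that] by blast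
    moreover have "\<exists>t'. indist J i (h s) t' \<and> (s', t') \<in> {(s, h s) | s. s \<in> gst I}"
      if "indist I i s s'" for i s'
      using indist_h[OF that] that reach_h unfolding indist_def by blast
    ultimately show "case x of (s, t) \<Rightarrow>
        (\<forall>p \<in> Phi'. valu I s p = valu J t p) \<and>
        (\<forall>a s'. trans I a s = Some s' \<longrightarrow>
           (\<exists>b t'. trans J b t = Some t' \<and> (s', t') \<in> {(s, h s) | s. s \<in> gst I})) \<and>
        (\<forall>i s'. indist I i s s' \<longrightarrow>
           (\<exists>t'. indist J i t t' \<and> (s', t') \<in> {(s, h s) | s. s \<in> gst I}))"
      unfolding x by simp
  qed
qed

lemma Theta_single:
  "Theta Phi own E l {s} = (if eval (gam own s) l then {apply_eff Phi own E s} else {})"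
  unfolding Theta_def by auto

lemma apply_eff_empty: "apply_eff Phi own {} s = s"
  by (simp add: apply_eff_def)

lemma pa_trans_Some_iff:
  "pa_trans Phi own Acts eff perm a s = Some s' \<longleftrightarrow>
     s \<in> canon Phi own \<and>
     (case a of None \<Rightarrow> s' = s
      | Some \<alpha> \<Rightarrow> \<alpha> \<in> Acts \<and> eval (gam own s) (perm \<alpha>) \<and> s' = apply_eff Phi own (eff \<alpha>) s)"
  by (cases a) (auto simp: pa_trans_def Theta_single apply_eff_empty)

text \<open>Effects preserve canonicity: only owned propositions of Phi are ever set.\<close>
lemma apply_eff_canon:
  assumes "s \<in> canon Phi own" shows "apply_eff Phi own E s \<in> canon Phi own"
  using assms unfolding canon_def mem_Collect_eq apply_eff_def by (metis (full_types))

lemma habs_canon: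
  "s \<in> canon Phi own \<Longrightarrow> Phi' \<subseteq> Phi \<Longrightarrow> habs Phi' s \<in> canon Phi' own"
  unfolding canon_def habs_def by auto

lemma habs_apply_eff:
  "Phi' \<subseteq> Phi \<Longrightarrow>
   apply_eff Phi' own (vis_eff Phi' E) (habs Phi' s) = habs Phi' (apply_eff Phi own E s)"
  unfolding apply_eff_def habs_def vis_eff_def by (intro ext) auto

lemma rep_act_class:
  assumes "\<alpha> \<in> Acts"
  shows "act_equiv Phi Phi' agt eff perm (rep (act_class Phi Phi' Acts agt eff perm \<alpha>)) \<alpha>"
proof -
  have "\<alpha> \<in> act_class Phi Phi' Acts agt eff perm \<alpha>"
    using assms unfolding act_class_def act_equiv_def by auto
  then have "rep (act_class Phi Phi' Acts agt eff perm \<alpha>) \<in> act_class Phi Phi' Acts agt eff perm \<alpha>"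
    unfolding rep_def by (rule someI)
  then show ?thesis unfolding act_class_def by blast
qed

lemma abs_action_step:
  assumes fin: "finite (Phi - Phi')" and sub: "Phi' \<subseteq> Phi"
    and sc: "s \<in> canon Phi own" and \<alpha>: "\<alpha> \<in> Acts"
    and enabled: "eval (gam own s) (perm \<alpha>)"
  shows "trans (abs_sys Phi Phi' own S0 Acts agt eff perm)
           (Some (act_class Phi Phi' Acts agt eff perm \<alpha>)) (habs Phi' s)
         = Some (habs Phi' (apply_eff Phi own (eff \<alpha>) s))"
proof -
  let ?C = "act_class Phi Phi' Acts agt eff perm \<alpha>"
  have equiv: "act_equiv Phi Phi' agt eff perm (rep ?C) \<alpha>"
    using rep_act_class[OF \<alpha>] .
  have visible_agree: "\<forall>p. p \<notin> Phi - Phi' \<longrightarrow> gam own (habs Phi' s) p = gam own s p"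
    using sc sub unfolding gam_def habs_def canon_def by auto
  have "eval (gam own (habs Phi' s)) (exset (Phi - Phi') (perm \<alpha>))"
    using eval_exset[OF fin enabled visible_agree] .
  then have abs_enabled: "eval (gam own (habs Phi' s)) (exset (Phi - Phi') (perm (rep ?C)))"
    using equiv unfolding act_equiv_def by simp
  have abs_effect: "apply_eff Phi' own (vis_eff Phi' (eff (rep ?C))) (habs Phi' s)
                    = habs Phi' (apply_eff Phi own (eff \<alpha>) s)"
    using equiv habs_apply_eff[OF sub] unfolding act_equiv_def by simp
  show ?thesis
    using habs_canon[OF sc sub] \<alpha> abs_enabled abs_effect
    unfolding abs_sys_def pa_sys_def by (simp add: pa_trans_Some_iff)
qed

lemma abs_step_match:
  assumes fin: "finite (Phi - Phi')" and sub: "Phi' \<subseteq> Phi"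
    and step: "trans (pa_sys Phi own S0 Acts eff perm) a s = Some s'"
  shows "\<exists>b. trans (abs_sys Phi Phi' own S0 Acts agt eff perm) b (habs Phi' s) = Some (habs Phi' s')"
proof -
  have step': "pa_trans Phi own Acts eff perm a s = Some s'"
    using step by (simp add: pa_sys_def)
  then have sc: "s \<in> canon Phi own" by (simp add: pa_trans_Some_iff)
  show ?thesis
  proof (cases a)
    case None
    then have "s' = s" using step' by (simp add: pa_trans_Some_iff)
    moreover have "habs Phi' s \<in> canon Phi' own" using habs_canon[OF sc sub] .
    ultimately have "trans (abs_sys Phi Phi' own S0 Acts agt eff perm) None (habs Phi' s)
                     = Some (habs Phi' s')"
      unfolding abs_sys_def pa_sys_def by (simp add: pa_trans_Some_iff)
    then show ?thesis by blast
  next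
    case (Some \<alpha>)
    then have \<alpha>: "\<alpha> \<in> Acts" and enabled: "eval (gam own s) (perm \<alpha>)"
      and s': "s' = apply_eff Phi own (eff \<alpha>) s"
      using step' by (simp_all add: pa_trans_Some_iff)
    show ?thesis
      unfolding s' using abs_action_step[where perm = perm, OF fin sub sc \<alpha> enabled] by (rule exI)
  qed
qed

theorem proposition2:
  fixes Phi Phi' :: "'p set" and own :: "'p \<Rightarrow> 'ag"
    and S0 :: "('ag \<Rightarrow> 'p \<Rightarrow> bool) set" and Acts :: "'act set"
    and agt :: "'act \<Rightarrow> 'ag" and eff :: "'act \<Rightarrow> ('p \<times> bool) set" and perm :: "'act \<Rightarrow> 'p form"
  assumes "pa_wf Phi own S0 Acts eff perm"
    and "Phi' \<subseteq> Phi"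
  shows "simulation (pa_sys Phi own S0 Acts eff perm)
                    (abs_sys Phi Phi' own S0 Acts agt eff perm)
                    Phi'
                    {(s, habs Phi' s) | s. s \<in> canon Phi own}"
proof -
  let ?I = "pa_sys Phi own S0 Acts eff perm"
  let ?J = "abs_sys Phi Phi' own S0 Acts agt eff perm"
  have S0: "S0 \<subseteq> canon Phi own" and fin: "finite (Phi - Phi')"
    using assms(1) unfolding pa_wf_def by auto
  have "simulation ?I ?J Phi' {(s, habs Phi' s) | s. s \<in> gst ?I}"
  proof (rule graph_simulation)
    show "s' \<in> gst ?I" if "s \<in> gst ?I" "trans ?I a s = Some s'" for s a s'
      using that apply_eff_canon by (cases a) (auto simp: pa_sys_def pa_trans_Some_iff)
    show "trans ?I a s = Some s' \<Longrightarrow> \<exists>b. trans ?J b (habs Phi' s) = Some (habs Phi' s')"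
      for s a s' using abs_step_match[OF fin assms(2)] .
    show "ini ?I \<subseteq> gst ?I" using S0 by (simp add: pa_sys_def)
    show "habs Phi' ` gst ?I \<subseteq> gst ?J"
      using habs_canon[OF _ assms(2)] by (auto simp: pa_sys_def abs_sys_def)
    show "habs Phi' ` ini ?I \<subseteq> ini ?J" by (simp add: pa_sys_def abs_sys_def)
    show "valu ?I s p = valu ?J (habs Phi' s) p" if "p \<in> Phi'" for s p
      using that by (simp add: pa_sys_def abs_sys_def gam_def habs_def)
    show "lst ?I i s = lst ?I i s' \<Longrightarrow> lst ?J i (habs Phi' s) = lst ?J i (habs Phi' s')"
      for i s s' by (simp add: pa_sys_def abs_sys_def habs_def)
  qed
  then show ?thesis by (simp add: pa_sys_def)
qed

end
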